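(* Assume the setting below, on the mesh $S_\lambda$ with either $\lambda=N$ or $\lambda=\varepsilon^{-1}$. Suppose there are a constant $C^*>0$ and numbers $\eta_1,\eta_2\ge 0$ such that the truncation error of $w$ satisfies \[ |\tau_i[w]|\le \tau_i^*:=\begin{cases} C^*\eta_1\left(1+\varepsilon^{-1}e^{-\beta x_i/\varepsilon}\right), & 1\le i\le J-1,\\ C^*\eta_2, & J\le i\le N-1.\end{cases} \] Then \[ \|w^N-W^N\|\le C\eta,\qquad \eta=\max\{\kappa\eta_1,\eta_2\}, \] where $\kappa=1$ if $\lambda=N$ and $\kappa=1+|\ln\varepsilon|N^{-1}$ if $\lambda=\varepsilon^{-1}$. Here $C$ depends only on $C^*$ and the data $b,c,\beta,Q,a$; it does not depend on $\varepsilon$, $N$, $\eta_1$ or $\eta_2$.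
   Context: Standing setup. Let $0<\varepsilon<1$. Let $b,c,f\in C^4[0,1]$, and let $\beta$ be a constant with $b(x)>\beta>0$ and $c(x)\ge0$ on $[0,1]$. Let $u$ be the solution of $-\varepsilon u''-b u'+cu=f$ on $(0,1)$ with $u(0)=u(1)=0$. Let $u_0$ be the reduced solution, i.e. the solution of $-b u_0'+c u_0=f$ on $(0,1)$ with $u_0(1)=0$. Set $w=u-u_0$; it solves $-\varepsilon w''-bw'+cw=\varepsilon u_0''$ on $(0,1)$, $w(0)=-u_0(0)$, $w(1)=0$. Mesh $S_\lambda$. $N$ is a positive integer. $Q\in(0,1)$ is a fixed rational number such that $J=QN$ is an integer. $a>0$ is a mesh parameter, and $\lambda\in\{N,\varepsilon^{-1}\}$. The transition point is $\xi=(a\varepsilon/\beta)\ln\lambda$, assumed to satisfy $\xi\le Q$. Set $h=\xi/J$ and $H=(1-\xi)/(N-J)$. The mesh points are $x_i=ih$ for $0\le i\le J$ and $x_i=\xi+(i-J)H$ for $J\le i\le N$. Write $h_i=x_i-x_{i-1}$ and $\hbar_i=(h_i+h_{i+1})/2$. $S_N$ is the Shishkin mesh and $S_{1/\varepsilon}$ is the A-mesh. Scheme. For mesh functions define $D^+U_i=(U_{i+1}-U_i)/h_{i+1}$, $D^-U_i=(U_i-U_{i-1})/h_i$ and $D''U_i=(D^+U_i-D^-U_i)/\hbar_i$. Let $\sigma(\rho)=2\rho/(e^{2\rho}-1)$ for $\rho>0$, $\sigma(0)=1$, and $\rho_i=b(x_i)h_{i+1}/(2\varepsilon)$. The ASI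 operator is \[ L^NU_i=-\varepsilon\sigma(\rho_i)D''U_i-b(x_i)D^+U_i+c(x_i)U_i,\qquad 1\le i\le N-1. \] $W^N$ denotes the solution of $W^N_0=-u_0(0)$, $L^NW^N_i=\varepsilon u_0''(x_i)$ for $1\le i\le N-1$, $W^N_N=0$. For a function $g$, $g^N$ is its restriction to the mesh, and $\|U\|=\max_{0\le i\le N}|U_i|$. For smooth $g$ the truncation error is \[ \tau_i[g]=-\varepsilon\sigma(\rho_i)D''g(x_i)-b(x_i)D^+g(x_i)+\varepsilon g''(x_i)+b(x_i)g'(x_i),\qquad 1\le i\le N-1. \] $C$ denotes a generic positive constant independent of $\varepsilon$ and $N$. *)

theory Defs
  imports "HOL-Analysis.Analysis"
begin

definition Ck_on :: "nat \<Rightarrow> (real \<Rightarrow> real) \<Rightarrow> real set \<Rightarrow> bool" where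
  "Ck_on k g S \<longleftrightarrow> (\<exists>D :: nat \<Rightarrow> real \<Rightarrow> real.
      (\<forall>x\<in>S. D 0 x = g x) \<and>
      (\<forall>j<k. \<forall>x\<in>S. (D j has_real_derivative D (Suc j) x) (at x within S)) \<and>
      (\<forall>j\<le>k. continuous_on S (D j)))"

definition mesh :: "nat \<Rightarrow> nat \<Rightarrow> real \<Rightarrow> nat \<Rightarrow> real" where
  "mesh N J xi i = (if i \<le> J then real i * (xi / real J)
                    else xi + real (i - J) * ((1 - xi) / real (N - J)))"

definition stepw :: "(nat \<Rightarrow> real) \<Rightarrow> nat \<Rightarrow> real" where
  "stepw x i = x i - x (i - 1)"

definition hbar :: "(nat \<Rightarrow> real) \<Rightarrow> nat \<Rightarrow> real" where
  "hbar x i = (stepw x i + stepw x (Suc i)) / 2"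

definition Dp :: "(nat \<Rightarrow> real) \<Rightarrow> (nat \<Rightarrow> real) \<Rightarrow> nat \<Rightarrow> real" where
  "Dp x U i = (U (Suc i) - U i) / stepw x (Suc i)"

definition Dm :: "(nat \<Rightarrow> real) \<Rightarrow> (nat \<Rightarrow> real) \<Rightarrow> nat \<Rightarrow> real" where
  "Dm x U i = (U i - U (i - 1)) / stepw x i"

definition Dpp :: "(nat \<Rightarrow> real) \<Rightarrow> (nat \<Rightarrow> real) \<Rightarrow> nat \<Rightarrow> real" where
  "Dpp x U i = (Dp x U i - Dm x U i) / hbar x i"

definition sigma :: "real \<Rightarrow> real" where
  "sigma r = (if r = 0 then 1 else 2 * r / (exp (2 * r) - 1))"

definition rho :: "real \<Rightarrow> (real \<Rightarrow> real) \<Rightarrow> (nat \<Rightarrow> real) \<Rightarrow> nat \<Rightarrow> real" where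
  "rho eps b x i = b (x i) * stepw x (Suc i) / (2 * eps)"

definition LN :: "real \<Rightarrow> (real \<Rightarrow> real) \<Rightarrow> (real \<Rightarrow> real) \<Rightarrow> (nat \<Rightarrow> real)
                   \<Rightarrow> (nat \<Rightarrow> real) \<Rightarrow> nat \<Rightarrow> real" where
  "LN eps b c x U i = - eps * sigma (rho eps b x i) * Dpp x U i - b (x i) * Dp x U i + c (x i) * U i"

text \<open>Truncation error tau_i[g] for g with first and second derivatives g1, g2.\<close>
definition trunc :: "real \<Rightarrow> (real \<Rightarrow> real) \<Rightarrow> (nat \<Rightarrow> real) \<Rightarrow> (real \<Rightarrow> real)
                   \<Rightarrow> (real \<Rightarrow> real) \<Rightarrow> (real \<Rightarrow> real) \<Rightarrow> nat \<Rightarrow> real" where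
  "trunc eps b x g g1 g2 i =
     - eps * sigma (rho eps b x i) * Dpp x (\<lambda>j. g (x j)) i - b (x i) * Dp x (\<lambda>j. g (x j)) i
     + eps * g2 (x i) + b (x i) * g1 (x i)"

end

(*
  The ASI operator L^N is inverse-monotone: sigma > 0, the upwind difference D^+ and b > 0,
  c >= 0 give a discrete minimum principle. The error e = w^N - W^N vanishes at both ends and
  satisfies L^N e = tau[w] at the inner nodes, so it is dominated by any barrier Phi with
  |tau[w]| <= L^N Phi. We take Phi = (8 C* eta1 / beta^2) psi + (C* max(eta1, eta2) / beta) (1 - x),
  where psi_i = prod_{k <= i} (1 + beta h_k / (4 eps))^-1 is the discrete analogue of
  exp (- beta x / (4 eps)): L^N psi_i >= beta^2 / (8 eps) psi_{i+1}, and on the fine part of the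
  mesh, where h_{i+1} <= x_i, psi_{i+1} >= exp (- beta x_i / (2 eps)). This gives
  |e| <= C* (8 / beta^2 + 1 / beta) max(eta1, eta2), which implies the claim because kappa >= 1.
  The smoothness of b, c, f enters only through the assumed bound on the truncation error.
*)

theory Submission
  imports Defs
begin

lemma sigma_pos: "0 < sigma r"
proof (cases "r = 0")
  case False
  have "exp (2 * r) - 1 > 0 \<longleftrightarrow> r > 0" by simp
  then show ?thesis using False by (auto simp: sigma_def zero_less_divide_iff)
qed (simp add: sigma_def)

lemma sigma_le_one:
  assumes "0 \<le> r" shows "sigma r \<le> 1"
proof (cases "r = 0")
  case False
  have "2 * r + 1 \<le> exp (2 * r)" using exp_ge_add_one_self[of "2 * r"] by linarith
  then show ?thesis using False assms by (simp add: sigma_def divide_le_eq)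
qed (simp add: sigma_def)

lemma LN_lincomb:
  "LN eps b c x (\<lambda>j. p * U j + q * V j) i = p * LN eps b c x U i + q * LN eps b c x V i"
  unfolding LN_def Dpp_def Dp_def Dm_def by (simp add: divide_inverse; algebra)

lemma LN_one_minus_mesh:
  assumes "x (i - 1) < x i" and "x i < x (Suc i)"
  shows "LN eps b c x (\<lambda>j. 1 - x j) i = b (x i) + c (x i) * (1 - x i)"
proof -
  have "Dp x (\<lambda>j. 1 - x j) i = -1" "Dm x (\<lambda>j. 1 - x j) i = -1"
    using assms by (simp_all add: Dp_def Dm_def stepw_def divide_eq_eq)
  then show ?thesis by (simp add: LN_def Dpp_def)
qed

lemma LN_trunc:
  "LN eps b c x (\<lambda>j. g (x j)) i
     = trunc eps b x g g1 g2 i - eps * g2 (x i) - b (x i) * g1 (x i) + c (x i) * g (x i)"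
  unfolding LN_def trunc_def by simp

lemma LN_error_eq_trunc:
  assumes "- eps * u2 (x i) - b (x i) * u1 (x i) + c (x i) * u (x i) = f (x i)"
    and "- b (x i) * u01 (x i) + c (x i) * u0 (x i) = f (x i)"
    and "LN eps b c x W i = eps * u02 (x i)"
  shows "LN eps b c x (\<lambda>j. u (x j) - u0 (x j) - W j) i
           = trunc eps b x (\<lambda>t. u t - u0 t) (\<lambda>t. u1 t - u01 t) (\<lambda>t. u2 t - u02 t) i"
  using assms LN_lincomb[of eps b c x 1 "\<lambda>j. u (x j) - u0 (x j)" "-1" W i]
    LN_trunc[of eps b c x "\<lambda>t. u t - u0 t" i "\<lambda>t. u1 t - u01 t" "\<lambda>t. u2 t - u02 t"]
  by (simp add: algebra_simps)

lemma nodes_in_unit_interval: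
  fixes x :: "nat \<Rightarrow> real"
  assumes x0: "x 0 = 0" and xN: "x N = 1" and mono: "\<And>i. i < N \<Longrightarrow> x i < x (Suc i)"
  shows "i \<le> N \<Longrightarrow> x i \<in> {0..1}" and "0 < i \<Longrightarrow> i < N \<Longrightarrow> x i \<in> {0<..<1}"
proof -
  have mono': "x k < x (Suc k)" if "k \<in> {..<N}" for k using mono that by simp
  have le: "x i \<le> x j" if "i \<le> j" "j \<le> N" for i j
    by (rule lift_Suc_mono_le_ivl[of "{..<N}" x, OF less_imp_le[OF mono']]) (use that in auto)
  have less: "x i < x j" if "i < j" "j \<le> N" for i j
    by (rule lift_Suc_mono_less_ivl[of "{..<N}" x, OF mono']) (use that in auto)
  show "x i \<in> {0..1}" if "i \<le> N"
    using le[of 0 i] le[of i N] that x0 xN by simp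
  show "x i \<in> {0<..<1}" if "0 < i" "i < N"
    using less[of 0 i] less[of i N] that x0 xN by simp
qed

lemma LN_min_principle:
  fixes x V :: "nat \<Rightarrow> real"
  assumes eps: "0 < eps" and mono: "\<And>i. i < N \<Longrightarrow> x i < x (Suc i)"
    and b: "\<And>i. 1 \<le> i \<Longrightarrow> i < N \<Longrightarrow> 0 < b (x i)"
    and c: "\<And>i. 1 \<le> i \<Longrightarrow> i < N \<Longrightarrow> 0 \<le> c (x i)"
    and V0: "0 \<le> V 0" and VN: "0 \<le> V N"
    and LV: "\<And>i. 1 \<le> i \<Longrightarrow> i < N \<Longrightarrow> 0 \<le> LN eps b c x V i"
    and "i \<le> N"
  shows "0 \<le> V i"
proof (rule ccontr)
  assume "\<not> 0 \<le> V i"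
  define m where "m = Min (V ` {..N})"
  have m_le: "\<And>j. j \<le> N \<Longrightarrow> m \<le> V j" by (simp add: m_def)
  have m_neg: "m < 0" using m_le[OF \<open>i \<le> N\<close>] \<open>\<not> 0 \<le> V i\<close> by linarith
  have "m \<in> V ` {..N}" unfolding m_def by (rule Min_in) auto
  then have "\<exists>j. j \<le> N \<and> V j = m" by auto
  define k where "k = (LEAST j. j \<le> N \<and> V j = m)"
  have k: "k \<le> N" "V k = m" using LeastI_ex[OF \<open>\<exists>j. j \<le> N \<and> V j = m\<close>] by (simp_all add: k_def)
  have first: "V j \<noteq> m" if "j < k" for j
    using not_less_Least[OF that[unfolded k_def]] that k(1) by simp
  have "k \<noteq> 0" "k \<noteq> N" using k(2) V0 VN m_neg by (metis leD)+
  then have "1 \<le> k" "k < N" using k(1) by auto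
  have prev: "m < V (k - 1)" using first[of "k - 1"] m_le[of "k - 1"] \<open>1 \<le> k\<close> \<open>k < N\<close> by fastforce
  have succ: "m \<le> V (Suc k)" using m_le \<open>k < N\<close> by simp
  have h: "0 < stepw x k" "0 < stepw x (Suc k)"
    using mono[of "k - 1"] mono[of k] \<open>1 \<le> k\<close> \<open>k < N\<close> by (simp_all add: stepw_def)
  have Dp: "0 \<le> Dp x V k" using h succ k by (simp add: Dp_def)
  have Dm: "Dm x V k < 0" using h prev k by (simp add: Dm_def divide_neg_pos)
  have "0 < Dpp x V k" using Dp Dm h by (simp add: Dpp_def hbar_def)
  then have "0 < eps * sigma (rho eps b x k) * Dpp x V k" using eps sigma_pos by simp
  moreover have "0 \<le> b (x k) * Dp x V k" using b[OF \<open>1 \<le> k\<close> \<open>k < N\<close>] Dp by simp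
  moreover have "c (x k) * V k \<le> 0"
    using c[OF \<open>1 \<le> k\<close> \<open>k < N\<close>] k m_neg by (simp add: mult_nonneg_nonpos)
  ultimately have "LN eps b c x V k < 0" unfolding LN_def by linarith
  then show False using LV[OF \<open>1 \<le> k\<close> \<open>k < N\<close>] by linarith
qed

lemma LN_comparison:
  fixes x e \<Phi> :: "nat \<Rightarrow> real"
  assumes eps: "0 < eps" and mono: "\<And>i. i < N \<Longrightarrow> x i < x (Suc i)"
    and b: "\<And>i. 1 \<le> i \<Longrightarrow> i < N \<Longrightarrow> 0 < b (x i)"
    and c: "\<And>i. 1 \<le> i \<Longrightarrow> i < N \<Longrightarrow> 0 \<le> c (x i)"
    and "\<bar>e 0\<bar> \<le> \<Phi> 0" and "\<bar>e N\<bar> \<le> \<Phi> N"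
    and Le: "\<And>i. 1 \<le> i \<Longrightarrow> i < N \<Longrightarrow> \<bar>LN eps b c x e i\<bar> \<le> LN eps b c x \<Phi> i"
    and "i \<le> N"
  shows "\<bar>e i\<bar> \<le> \<Phi> i"
proof -
  have LN_shift: "LN eps b c x (\<lambda>j. \<Phi> j + s * e j) j = LN eps b c x \<Phi> j + s * LN eps b c x e j"
    for s j using LN_lincomb[of eps b c x 1 \<Phi> s e j] by simp
  have "0 \<le> \<Phi> i + s * e i" if s: "s = 1 \<or> s = -1" for s :: real
  proof (rule LN_min_principle[of eps N x b c "\<lambda>j. \<Phi> j + s * e j"])
    show "0 \<le> \<Phi> 0 + s * e 0" "0 \<le> \<Phi> N + s * e N" using s assms(5,6) by auto
    show "0 \<le> LN eps b c x (\<lambda>j. \<Phi> j + s * e j) j" if "1 \<le> j" "j < N" for j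
      using Le[OF that] s by (auto simp: LN_shift)
  qed (use assms in auto)
  from this[of 1] this[of "-1"] show ?thesis by simp
qed

fun disc_exp :: "real \<Rightarrow> real \<Rightarrow> (nat \<Rightarrow> real) \<Rightarrow> nat \<Rightarrow> real" where
  "disc_exp g eps x 0 = 1"
| "disc_exp g eps x (Suc i) = disc_exp g eps x i / (1 + g * (x (Suc i) - x i) / eps)"

declare disc_exp.simps(2) [simp del]

lemma disc_exp_factor_ge_1:
  fixes g eps :: real and x :: "nat \<Rightarrow> real"
  assumes "0 \<le> g" and "0 < eps" and "x k \<le> x (Suc k)"
  shows "1 \<le> 1 + g * (x (Suc k) - x k) / eps"
proof -
  have "0 \<le> g * (x (Suc k) - x k) / eps" using assms by (intro divide_nonneg_pos mult_nonneg_nonneg) auto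
  then show ?thesis by simp
qed

lemma disc_exp_pos:
  assumes "0 \<le> g" and "0 < eps" and "\<And>k. k < i \<Longrightarrow> x k \<le> x (Suc k)"
  shows "0 < disc_exp g eps x i"
  using assms(3)
proof (induction i)
  case (Suc i)
  then show ?case using disc_exp_factor_ge_1[OF assms(1,2), of x i] by (simp add: disc_exp.simps)
qed simp

lemma disc_exp_le_1:
  assumes "0 \<le> g" and "0 < eps" and "\<And>k. k < i \<Longrightarrow> x k \<le> x (Suc k)"
  shows "disc_exp g eps x i \<le> 1"
  using assms(3)
proof (induction i)
  case (Suc i)
  then show ?case using disc_exp_factor_ge_1[OF assms(1,2), of x i] by (simp add: disc_exp.simps divide_le_eq)
qed simp

lemma exp_le_disc_exp:
  assumes "0 \<le> g" and "0 < eps" and "\<And>k. k < i \<Longrightarrow> x k \<le> x (Suc k)"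
  shows "exp (- g * (x i - x 0) / eps) \<le> disc_exp g eps x i"
  using assms(3)
proof (induction i)
  case (Suc i)
  define r where "r = 1 + g * (x (Suc i) - x i) / eps"
  have "1 \<le> r" using disc_exp_factor_ge_1[OF assms(1,2), of x i] Suc.prems by (simp add: r_def)
  have "r \<le> exp (g * (x (Suc i) - x i) / eps)"
    using exp_ge_add_one_self by (simp add: r_def add.commute)
  have "exp (- g * (x (Suc i) - x 0) / eps)
          = exp (- g * (x i - x 0) / eps) / exp (g * (x (Suc i) - x i) / eps)"
    using assms(2) by (simp add: exp_diff[symmetric] field_simps)
  also have "\<dots> \<le> disc_exp g eps x i / r"
    using Suc disc_exp_pos[OF assms(1,2), of i x] \<open>1 \<le> r\<close> \<open>r \<le> _\<close>
    by (intro frac_le) auto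
  finally show ?case by (simp add: r_def disc_exp.simps)
qed simp

lemma disc_exp_diff:
  assumes "0 \<le> g" and "0 < eps" and "x j \<le> x (Suc j)"
  shows "disc_exp g eps x j - disc_exp g eps x (Suc j) = g / eps * stepw x (Suc j) * disc_exp g eps x (Suc j)"
proof -
  define r where "r = 1 + g * stepw x (Suc j) / eps"
  have "1 \<le> r" using disc_exp_factor_ge_1[OF assms] by (simp add: r_def stepw_def)
  have "disc_exp g eps x (Suc j) = disc_exp g eps x j / r" by (simp add: disc_exp.simps r_def stepw_def)
  then have "disc_exp g eps x j = r * disc_exp g eps x (Suc j)" using \<open>1 \<le> r\<close> by simp
  then show ?thesis by (simp add: r_def algebra_simps)
qed

lemma Dp_Dm_disc_exp:
  assumes g: "0 \<le> g" and eps: "0 < eps" and "1 \<le> i"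
    and mono: "\<And>k. k \<le> i \<Longrightarrow> x k < x (Suc k)"
  shows "Dp x (disc_exp g eps x) i = - g / eps * disc_exp g eps x (Suc i)"
    and "Dm x (disc_exp g eps x) i = - g / eps * disc_exp g eps x i"
proof -
  obtain k where k: "i = Suc k" using \<open>1 \<le> i\<close> by (cases i) auto
  have "0 < stepw x i" "0 < stepw x (Suc i)"
    using mono[of k] mono[of i] by (simp_all add: stepw_def k)
  show "Dp x (disc_exp g eps x) i = - g / eps * disc_exp g eps x (Suc i)"
    using disc_exp_diff[OF g eps, of x i] mono[of i] \<open>0 < stepw x (Suc i)\<close>
    by (simp add: Dp_def field_simps)
  show "Dm x (disc_exp g eps x) i = - g / eps * disc_exp g eps x i"
    using disc_exp_diff[OF g eps, of x k] mono[of k] \<open>0 < stepw x i\<close>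
    by (simp add: Dm_def k field_simps)
qed

lemma LN_disc_exp_ge:
  assumes g: "0 < g" and eps: "0 < eps" and "1 \<le> i"
    and mono: "\<And>k. k \<le> i \<Longrightarrow> x k < x (Suc k)"
    and b: "2 * g \<le> b (x i)" and c: "0 \<le> c (x i)"
  shows "g * (b (x i) - 2 * g) * (disc_exp g eps x (Suc i) / eps) \<le> LN eps b c x (disc_exp g eps x) i"
proof -
  let ?\<psi> = "disc_exp g eps x"
  obtain k where k: "i = Suc k" using \<open>1 \<le> i\<close> by (cases i) auto
  define h1 h2 where "h1 = stepw x i" and "h2 = stepw x (Suc i)"
  have h: "0 < h1" "0 < h2" using mono[of k] mono[of i] by (simp_all add: h1_def h2_def stepw_def k)
  have \<psi>_pos: "0 < ?\<psi> j" if "j \<le> Suc i" for j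
    using disc_exp_pos[of g eps j x] g eps mono that by (simp add: less_imp_le)
  note Dp = Dp_Dm_disc_exp(1)[where x = x, OF less_imp_le[OF g] eps \<open>1 \<le> i\<close> mono]
  note Dm = Dp_Dm_disc_exp(2)[where x = x, OF less_imp_le[OF g] eps \<open>1 \<le> i\<close> mono]
  define d where "d = g / eps * ?\<psi> (Suc i)"
  have "0 < d" using g eps \<psi>_pos[of "Suc i"] by (simp add: d_def)
  have "Dpp x ?\<psi> i = g / eps * (?\<psi> i - ?\<psi> (Suc i)) / hbar x i"
    by (simp add: Dpp_def Dp Dm right_diff_distrib)
  also have "\<dots> = g / eps * d * (h2 / hbar x i)"
    using disc_exp_diff[of g eps x i] g eps mono[of i] by (simp add: h2_def d_def)
  finally have Dpp: "Dpp x ?\<psi> i = g / eps * d * (h2 / hbar x i)" .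
  (* sigma <= 1 and h_{i+1} <= 2 hbar_i bound the diffusion term by 2 g d, which the
     convection term b d absorbs because b >= 2 g. *)
  have "h2 / hbar x i \<le> 2"
    using h by (simp add: hbar_def h1_def[symmetric] h2_def[symmetric] divide_le_eq)
  have "0 \<le> rho eps b x i" using b g eps h by (simp add: rho_def h2_def[symmetric])
  moreover have "0 \<le> Dpp x ?\<psi> i"
    using g eps h \<open>0 < d\<close> by (simp add: Dpp hbar_def h1_def[symmetric] h2_def[symmetric])
  ultimately have "eps * sigma (rho eps b x i) * Dpp x ?\<psi> i \<le> eps * Dpp x ?\<psi> i"
    using eps by (intro mult_right_mono mult_left_le sigma_le_one) auto
  also have "\<dots> = g * d * (h2 / hbar x i)" using eps by (simp add: Dpp)
  also have "\<dots> \<le> g * d * 2"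
    using \<open>h2 / hbar x i \<le> 2\<close> g \<open>0 < d\<close> by (intro mult_left_mono) auto
  finally have "eps * sigma (rho eps b x i) * Dpp x ?\<psi> i \<le> g * d * 2" .
  moreover have "0 \<le> c (x i) * ?\<psi> i" using c \<psi>_pos[of i] by simp
  moreover have "LN eps b c x ?\<psi> i
      = - (eps * sigma (rho eps b x i) * Dpp x ?\<psi> i) + b (x i) * d + c (x i) * ?\<psi> i"
    by (simp add: LN_def Dp d_def)
  moreover have "g * (b (x i) - 2 * g) * (?\<psi> (Suc i) / eps) = b (x i) * d - g * d * 2"
    by (simp add: d_def diff_divide_distrib algebra_simps)
  ultimately show ?thesis by linarith
qed

lemma exp_le_disc_exp_layer:
  fixes x :: "nat \<Rightarrow> real"
  assumes g: "0 \<le> g" and eps: "0 < eps" and x0: "x 0 = 0"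
    and mono: "\<And>k. k \<le> i \<Longrightarrow> x k \<le> x (Suc k)" and fine: "x (Suc i) \<le> 2 * x i"
  shows "exp (- 2 * g * x i / eps) \<le> disc_exp g eps x (Suc i)"
proof -
  have "g * x (Suc i) \<le> 2 * g * x i" using mult_left_mono[OF fine g] by simp
  then have "exp (- 2 * g * x i / eps) \<le> exp (- g * x (Suc i) / eps)"
    using eps by (simp add: divide_right_mono)
  also have "\<dots> \<le> disc_exp g eps x (Suc i)"
    using exp_le_disc_exp[OF g eps, of "Suc i" x] mono x0 by simp
  finally show ?thesis .
qed

lemma LN_disc_exp_quarter_ge:
  assumes \<beta>: "0 < \<beta>" and eps: "0 < eps" and "1 \<le> i"
    and mono: "\<And>k. k \<le> i \<Longrightarrow> x k < x (Suc k)"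
    and b: "\<beta> \<le> b (x i)" and c: "0 \<le> c (x i)"
  shows "\<beta>\<^sup>2 / 8 * (disc_exp (\<beta> / 4) eps x (Suc i) / eps) \<le> LN eps b c x (disc_exp (\<beta> / 4) eps x) i"
proof -
  have "\<beta>\<^sup>2 / 8 \<le> \<beta> / 4 * (b (x i) - 2 * (\<beta> / 4))"
    using mult_left_mono[of "\<beta> / 2" "b (x i) - \<beta> / 2" "\<beta> / 4"] \<beta> b by (simp add: power2_eq_square)
  moreover have "0 \<le> disc_exp (\<beta> / 4) eps x (Suc i) / eps"
    using disc_exp_pos[of "\<beta> / 4" eps "Suc i" x] \<beta> eps mono by (simp add: less_imp_le)
  ultimately have "\<beta>\<^sup>2 / 8 * (disc_exp (\<beta> / 4) eps x (Suc i) / eps)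
      \<le> \<beta> / 4 * (b (x i) - 2 * (\<beta> / 4)) * (disc_exp (\<beta> / 4) eps x (Suc i) / eps)"
    by (rule mult_right_mono)
  also have "\<dots> \<le> LN eps b c x (disc_exp (\<beta> / 4) eps x) i"
    using \<beta> b by (intro LN_disc_exp_ge eps \<open>1 \<le> i\<close> mono c) auto
  finally show ?thesis .
qed

lemma LN_disc_exp_nonneg:
  assumes \<beta>: "0 < \<beta>" and eps: "0 < eps" and "1 \<le> i"
    and mono: "\<And>k. k \<le> i \<Longrightarrow> x k < x (Suc k)"
    and b: "\<beta> \<le> b (x i)" and c: "0 \<le> c (x i)"
  shows "0 \<le> LN eps b c x (disc_exp (\<beta> / 4) eps x) i"
proof -
  have "0 \<le> disc_exp (\<beta> / 4) eps x (Suc i) / eps"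
    using disc_exp_pos[of "\<beta> / 4" eps "Suc i" x] \<beta> eps mono by (simp add: less_imp_le)
  then have "0 \<le> \<beta>\<^sup>2 / 8 * (disc_exp (\<beta> / 4) eps x (Suc i) / eps)" by (simp only: zero_le_mult_iff) simp
  also have "\<dots> \<le> LN eps b c x (disc_exp (\<beta> / 4) eps x) i"
    by (intro LN_disc_exp_quarter_ge assms)
  finally show ?thesis .
qed

lemma LN_disc_exp_layer_ge:
  assumes \<beta>: "0 < \<beta>" and eps: "0 < eps" and "1 \<le> i" and x0: "x 0 = 0"
    and mono: "\<And>k. k \<le> i \<Longrightarrow> x k < x (Suc k)" and fine: "x (Suc i) \<le> 2 * x i"
    and b: "\<beta> \<le> b (x i)" and c: "0 \<le> c (x i)"
  shows "\<beta>\<^sup>2 / 8 * (exp (- \<beta> * x i / eps) / eps) \<le> LN eps b c x (disc_exp (\<beta> / 4) eps x) i"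
proof -
  have "0 \<le> x i"
    using mono[of i] fine by simp
  then have "exp (- \<beta> * x i / eps) \<le> exp (- 2 * (\<beta> / 4) * x i / eps)"
    using \<beta> eps by (simp add: frac_le)
  also have "\<dots> \<le> disc_exp (\<beta> / 4) eps x (Suc i)"
    using \<beta> eps x0 mono fine by (intro exp_le_disc_exp_layer) (auto simp: less_imp_le)
  finally have "\<beta>\<^sup>2 / 8 * (exp (- \<beta> * x i / eps) / eps) \<le> \<beta>\<^sup>2 / 8 * (disc_exp (\<beta> / 4) eps x (Suc i) / eps)"
    using eps by (intro mult_left_mono divide_right_mono) auto
  also have "\<dots> \<le> LN eps b c x (disc_exp (\<beta> / 4) eps x) i"
    by (intro LN_disc_exp_quarter_ge \<beta> eps \<open>1 \<le> i\<close> mono b c)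
  finally show ?thesis .
qed

definition barrier :: "real \<Rightarrow> real \<Rightarrow> real \<Rightarrow> real \<Rightarrow> (nat \<Rightarrow> real) \<Rightarrow> nat \<Rightarrow> real" where
  "barrier \<beta> T1 T2 eps x j = 8 / \<beta>\<^sup>2 * T1 * disc_exp (\<beta> / 4) eps x j + max T1 T2 / \<beta> * (1 - x j)"

lemma barrier_bounds:
  fixes x :: "nat \<Rightarrow> real"
  assumes \<beta>: "0 < \<beta>" and eps: "0 < eps" and T: "0 \<le> T1" "0 \<le> T2"
    and x0: "x 0 = 0" and xN: "x N = 1" and mono: "\<And>i. i < N \<Longrightarrow> x i < x (Suc i)"
    and "j \<le> N"
  shows "0 \<le> barrier \<beta> T1 T2 eps x j" and "barrier \<beta> T1 T2 eps x j \<le> (8 / \<beta>\<^sup>2 + 1 / \<beta>) * max T1 T2"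
proof -
  define A B where "A = 8 / \<beta>\<^sup>2 * T1" and "B = max T1 T2 / \<beta>"
  have "0 \<le> A" "0 \<le> B" using \<beta> T by (simp_all add: A_def B_def)
  have "0 < disc_exp (\<beta> / 4) eps x j" "disc_exp (\<beta> / 4) eps x j \<le> 1"
    using disc_exp_pos[of "\<beta> / 4" eps j x] disc_exp_le_1[of "\<beta> / 4" eps j x] \<beta> eps mono \<open>j \<le> N\<close>
    by (auto simp: less_imp_le)
  moreover have "0 \<le> 1 - x j" "1 - x j \<le> 1"
    using nodes_in_unit_interval(1)[OF x0 xN mono \<open>j \<le> N\<close>] by auto
  ultimately have "0 \<le> barrier \<beta> T1 T2 eps x j \<and> barrier \<beta> T1 T2 eps x j \<le> A + B"
    using \<open>0 \<le> A\<close> \<open>0 \<le> B\<close> mult_left_le[of "disc_exp (\<beta> / 4) eps x j" A] mult_left_le[of "1 - x j" B]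
      mult_nonneg_nonneg[of A "disc_exp (\<beta> / 4) eps x j"] mult_nonneg_nonneg[of B "1 - x j"]
    unfolding barrier_def A_def[symmetric] B_def[symmetric] by linarith
  moreover have "A + B \<le> (8 / \<beta>\<^sup>2 + 1 / \<beta>) * max T1 T2"
    using \<beta> T by (simp add: A_def B_def distrib_right divide_right_mono)
  ultimately show "0 \<le> barrier \<beta> T1 T2 eps x j"
    and "barrier \<beta> T1 T2 eps x j \<le> (8 / \<beta>\<^sup>2 + 1 / \<beta>) * max T1 T2" by auto
qed

lemma LN_barrier_ge:
  fixes x :: "nat \<Rightarrow> real"
  assumes \<beta>: "0 < \<beta>" and eps: "0 < eps" and T: "0 \<le> T1" "0 \<le> T2"
    and x0: "x 0 = 0" and xN: "x N = 1" and mono: "\<And>i. i < N \<Longrightarrow> x i < x (Suc i)"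
    and j: "1 \<le> j" "j < N" and b: "\<beta> \<le> b (x j)" and c: "0 \<le> c (x j)"
  shows "max T1 T2 + 8 / \<beta>\<^sup>2 * T1 * LN eps b c x (disc_exp (\<beta> / 4) eps x) j
           \<le> LN eps b c x (barrier \<beta> T1 T2 eps x) j"
proof -
  define A B where "A = 8 / \<beta>\<^sup>2 * T1" and "B = max T1 T2 / \<beta>"
  have "LN eps b c x (\<lambda>j. 1 - x j) j = b (x j) + c (x j) * (1 - x j)"
    using mono[of "j - 1"] mono[of j] j by (intro LN_one_minus_mesh) auto
  then have "LN eps b c x (barrier \<beta> T1 T2 eps x) j
      = A * LN eps b c x (disc_exp (\<beta> / 4) eps x) j + B * (b (x j) + c (x j) * (1 - x j))"
    using LN_lincomb[of eps b c x A "disc_exp (\<beta> / 4) eps x" B "\<lambda>j. 1 - x j" j]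
    by (simp add: barrier_def[abs_def] A_def B_def)
  moreover have "max T1 T2 = B * \<beta>" using \<beta> by (simp add: B_def)
  moreover have "B * \<beta> \<le> B * (b (x j) + c (x j) * (1 - x j))"
    using b mult_nonneg_nonneg[OF c, of "1 - x j"] nodes_in_unit_interval(1)[OF x0 xN mono, of j] j \<beta> T
    by (intro mult_left_mono) (auto simp: B_def)
  ultimately show ?thesis by (simp add: A_def)
qed

lemma ASI_stability:
  fixes x e :: "nat \<Rightarrow> real"
  assumes \<beta>: "0 < \<beta>" and eps: "0 < eps" and T: "0 \<le> T1" "0 \<le> T2"
    and x0: "x 0 = 0" and xN: "x N = 1" and mono: "\<And>i. i < N \<Longrightarrow> x i < x (Suc i)"
    and b: "\<And>i. 1 \<le> i \<Longrightarrow> i < N \<Longrightarrow> \<beta> \<le> b (x i)"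
    and c: "\<And>i. 1 \<le> i \<Longrightarrow> i < N \<Longrightarrow> 0 \<le> c (x i)"
    and fine: "\<And>i. 1 \<le> i \<Longrightarrow> i < J \<Longrightarrow> x (Suc i) \<le> 2 * x i"
    and e0: "e 0 = 0" and eN: "e N = 0"
    and layer: "\<And>i. 1 \<le> i \<Longrightarrow> i < J \<Longrightarrow>
                  \<bar>LN eps b c x e i\<bar> \<le> T1 * (1 + exp (- \<beta> * x i / eps) / eps)"
    and outer: "\<And>i. J \<le> i \<Longrightarrow> i < N \<Longrightarrow> \<bar>LN eps b c x e i\<bar> \<le> T2"
    and "i \<le> N"
  shows "\<bar>e i\<bar> \<le> (8 / \<beta>\<^sup>2 + 1 / \<beta>) * max T1 T2"
proof -
  let ?\<psi> = "disc_exp (\<beta> / 4) eps x" and ?\<Phi> = "barrier \<beta> T1 T2 eps x"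
  have "\<bar>LN eps b c x e j\<bar> \<le> LN eps b c x ?\<Phi> j" if j: "1 \<le> j" "j < N" for j
  proof -
    have mono_j: "\<And>k. k \<le> j \<Longrightarrow> x k < x (Suc k)" using mono j by simp
    have \<Phi>: "max T1 T2 + 8 / \<beta>\<^sup>2 * T1 * LN eps b c x ?\<psi> j \<le> LN eps b c x ?\<Phi> j"
      by (rule LN_barrier_ge[where x = x and N = N and b = b and c = c, OF \<beta> eps T x0 xN mono j b[OF j] c[OF j]])
    show ?thesis
    proof (cases "j < J")
      case True
      have "\<beta>\<^sup>2 / 8 * (exp (- \<beta> * x j / eps) / eps) \<le> LN eps b c x ?\<psi> j"
        using fine[OF j(1) True] by (intro LN_disc_exp_layer_ge \<beta> eps j(1) x0 mono_j b[OF j] c[OF j])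
      from mult_left_mono[OF this, of "8 / \<beta>\<^sup>2 * T1"]
      have "T1 * (exp (- \<beta> * x j / eps) / eps) \<le> 8 / \<beta>\<^sup>2 * T1 * LN eps b c x ?\<psi> j"
        using \<beta> T by simp
      then show ?thesis using layer[OF j(1) True] \<Phi> by (simp add: distrib_left)
    next
      case False
      have "0 \<le> LN eps b c x ?\<psi> j"
        by (intro LN_disc_exp_nonneg \<beta> eps j(1) mono_j b[OF j] c[OF j])
      then have "0 \<le> 8 / \<beta>\<^sup>2 * T1 * LN eps b c x ?\<psi> j" using T by simp
      then show ?thesis using outer[of j] False j \<Phi> by linarith
    qed
  qed
  note LN_dominates = this
  have "\<bar>e i\<bar> \<le> ?\<Phi> i"
  proof (rule LN_comparison[where x = x and N = N and b = b and c = c])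
    show "0 < b (x j)" if "1 \<le> j" "j < N" for j using b[OF that] \<beta> by linarith
    show "\<bar>e 0\<bar> \<le> ?\<Phi> 0" "\<bar>e N\<bar> \<le> ?\<Phi> N"
      using barrier_bounds(1)[OF \<beta> eps T x0 xN mono] e0 eN by auto
  qed (use eps mono c LN_dominates \<open>i \<le> N\<close> in auto)
  also have "\<dots> \<le> (8 / \<beta>\<^sup>2 + 1 / \<beta>) * max T1 T2"
    by (rule barrier_bounds(2)[OF \<beta> eps T x0 xN mono \<open>i \<le> N\<close>])
  finally show ?thesis .
qed

lemma mesh_0: "mesh N J \<xi> 0 = 0"
  by (simp add: mesh_def)

lemma mesh_N: "J < N \<Longrightarrow> mesh N J \<xi> N = 1"
  by (simp add: mesh_def)

lemma mesh_strict_mono: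
  assumes "0 < J" "J < N" "0 < \<xi>" "\<xi> < 1" "i < N"
  shows "mesh N J \<xi> i < mesh N J \<xi> (Suc i)"
proof (cases "Suc i \<le> J")
  case True
  then show ?thesis using assms by (simp add: mesh_def divide_strict_right_mono)
next
  case False
  then have "J \<le> i" by simp
  then show ?thesis using assms
    by (cases "i = J") (auto simp: mesh_def Suc_diff_le divide_strict_right_mono)
qed

lemma mesh_layer_step:
  assumes "1 \<le> i" "i < J" "0 \<le> \<xi>"
  shows "mesh N J \<xi> (Suc i) \<le> 2 * mesh N J \<xi> i"
proof -
  have "real (Suc i) * (\<xi> / real J) \<le> 2 * real i * (\<xi> / real J)"
    using assms by (intro mult_right_mono) auto
  then show ?thesis using assms by (simp add: mesh_def)
qed

lemma mesh_index_bounds: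
  assumes "real J = Q * real N" "0 < Q" "Q < 1" "0 < N"
  shows "0 < J" "J < N"
proof -
  have "0 < Q * real N" "Q * real N < 1 * real N"
    using assms by (simp_all add: mult_strict_right_mono)
  then show "0 < J" "J < N" using assms(1) by simp_all
qed

lemma transition_point_pos:
  assumes "0 < a" "0 < \<beta>" "0 < eps" "eps < 1" "1 < N"
  shows "0 < a * eps / \<beta> * ln (if shishkin then real N else 1 / eps)"
  using assms by simp

lemma max_le_max_scaled:
  fixes \<kappa> \<eta>1 \<eta>2 :: real
  assumes "1 \<le> \<kappa>" and "0 \<le> \<eta>1"
  shows "max \<eta>1 \<eta>2 \<le> max (\<kappa> * \<eta>1) \<eta>2"
  using mult_right_mono[OF assms] by (simp add: max.coboundedI1)

lemma ASI_error_bound: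
  fixes b c f u0 u01 u02 u u1 u2 :: "real \<Rightarrow> real" and W :: "nat \<Rightarrow> real"
  assumes \<beta>: "\<beta> > 0" and b: "\<forall>t\<in>{0..1}. b t > \<beta>" and c: "\<forall>t\<in>{0..1}. c t \<ge> 0"
    and Q: "0 < Q" "Q < 1" and a: "a > 0" and Cstar: "Cstar > 0"
    and u0_ode: "\<forall>t\<in>{0<..<1}. (u0 has_real_derivative u01 t) (at t)
                     \<and> (u01 has_real_derivative u02 t) (at t)
                     \<and> - b t * u01 t + c t * u0 t = f t"
    and u0_1: "u0 1 = 0"
    and \<xi>: "\<xi> = a * eps / \<beta> * ln (if shishkin then real N else 1 / eps)"
    and eps: "0 < eps" "eps < 1" and N: "0 < N" and J: "real J = Q * real N" and "\<xi> \<le> Q"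
    and u_ode: "\<forall>t\<in>{0<..<1}. (u has_real_derivative u1 t) (at t)
                     \<and> (u1 has_real_derivative u2 t) (at t)
                     \<and> - eps * u2 t - b t * u1 t + c t * u t = f t"
    and u_0: "u 0 = 0" and u_1: "u 1 = 0" and W_0: "W 0 = - u0 0" and W_N: "W N = 0"
    and W_eq: "\<forall>i. 1 \<le> i \<and> i \<le> N - 1 \<longrightarrow> LN eps b c (mesh N J \<xi>) W i = eps * u02 (mesh N J \<xi> i)"
    and \<eta>: "\<eta>1 \<ge> 0" "\<eta>2 \<ge> 0"
    and layer: "\<forall>i. 1 \<le> i \<and> i \<le> J - 1 \<longrightarrow>
        \<bar>trunc eps b (mesh N J \<xi>) (\<lambda>t. u t - u0 t) (\<lambda>t. u1 t - u01 t) (\<lambda>t. u2 t - u02 t) i\<bar>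
          \<le> Cstar * \<eta>1 * (1 + exp (- \<beta> * mesh N J \<xi> i / eps) / eps)"
    and outer: "\<forall>i. J \<le> i \<and> i \<le> N - 1 \<longrightarrow>
        \<bar>trunc eps b (mesh N J \<xi>) (\<lambda>t. u t - u0 t) (\<lambda>t. u1 t - u01 t) (\<lambda>t. u2 t - u02 t) i\<bar>
          \<le> Cstar * \<eta>2"
    and "i \<le> N"
  shows "\<bar>u (mesh N J \<xi> i) - u0 (mesh N J \<xi> i) - W i\<bar>
           \<le> Cstar * (8 / \<beta>\<^sup>2 + 1 / \<beta>) * max ((if shishkin then 1 else 1 + \<bar>ln eps\<bar> / real N) * \<eta>1) \<eta>2"
proof -
  let ?x = "mesh N J \<xi>"
  have "0 < J" "J < N" using mesh_index_bounds[OF J Q N] by auto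
  have "0 < \<xi>" using transition_point_pos[OF a \<beta> eps] \<open>0 < J\<close> \<open>J < N\<close> \<xi> by simp
  have "\<xi> < 1" using \<open>\<xi> \<le> Q\<close> Q by simp
  have x0: "?x 0 = 0" and xN: "?x N = 1" and mono: "\<And>i. i < N \<Longrightarrow> ?x i < ?x (Suc i)"
    using mesh_0 mesh_N[OF \<open>J < N\<close>] mesh_strict_mono[OF \<open>0 < J\<close> \<open>J < N\<close> \<open>0 < \<xi>\<close> \<open>\<xi> < 1\<close>] by auto
  have interior: "?x j \<in> {0<..<1}" if "1 \<le> j" "j < N" for j
    using nodes_in_unit_interval(2)[OF x0 xN mono] that by simp
  have LN_err: "LN eps b c ?x (\<lambda>j. u (?x j) - u0 (?x j) - W j) j
      = trunc eps b ?x (\<lambda>t. u t - u0 t) (\<lambda>t. u1 t - u01 t) (\<lambda>t. u2 t - u02 t) j"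
    if "1 \<le> j" "j < N" for j
    using interior[OF that] u_ode u0_ode W_eq that by (intro LN_error_eq_trunc) auto
  have "\<bar>u (?x i) - u0 (?x i) - W i\<bar> \<le> (8 / \<beta>\<^sup>2 + 1 / \<beta>) * max (Cstar * \<eta>1) (Cstar * \<eta>2)"
  proof (rule ASI_stability[where x = ?x and J = J and eps = eps and b = b and c = c])
    show "\<beta> \<le> b (?x j)" "0 \<le> c (?x j)" if "1 \<le> j" "j < N" for j
      using interior[OF that] b c by (auto simp: less_imp_le)
    show "?x (Suc j) \<le> 2 * ?x j" if "1 \<le> j" "j < J" for j
      using mesh_layer_step[OF that] \<open>0 < \<xi>\<close> by simp
    show "\<bar>LN eps b c ?x (\<lambda>j. u (?x j) - u0 (?x j) - W j) j\<bar>
        \<le> Cstar * \<eta>1 * (1 + exp (- \<beta> * ?x j / eps) / eps)" if "1 \<le> j" "j < J" for j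
      using layer LN_err[of j] that \<open>J < N\<close> by auto
    show "\<bar>LN eps b c ?x (\<lambda>j. u (?x j) - u0 (?x j) - W j) j\<bar> \<le> Cstar * \<eta>2" if "J \<le> j" "j < N" for j
      using outer LN_err[of j] that \<open>0 < J\<close> by auto
  qed (use \<beta> eps Cstar \<eta> x0 xN mono u_0 u_1 u0_1 W_0 W_N \<open>i \<le> N\<close> in auto)
  also have "\<dots> = (8 / \<beta>\<^sup>2 + 1 / \<beta>) * (Cstar * max \<eta>1 \<eta>2)"
    using Cstar by (simp add: max_mult_distrib_left)
  also have "\<dots> \<le> Cstar * (8 / \<beta>\<^sup>2 + 1 / \<beta>) * max ((if shishkin then 1 else 1 + \<bar>ln eps\<bar> / real N) * \<eta>1) \<eta>2"
  proof -
    have "max \<eta>1 \<eta>2 \<le> max ((if shishkin then 1 else 1 + \<bar>ln eps\<bar> / real N) * \<eta>1) \<eta>2"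
      by (rule max_le_max_scaled) (simp_all add: \<open>\<eta>1 \<ge> 0\<close>)
    from mult_left_mono[OF this, of "Cstar * (8 / \<beta>\<^sup>2 + 1 / \<beta>)"]
    show ?thesis using \<beta> Cstar by (simp add: mult_ac)
  qed
  finally show ?thesis .
qed

theorem theorem2:
  fixes b c f u0 u01 u02 :: "real \<Rightarrow> real"
    and \<beta> Q a Cstar :: real
    and shishkin :: bool
  assumes "Ck_on 4 b {0..1}" and "Ck_on 4 c {0..1}" and "Ck_on 4 f {0..1}"
    and "\<beta> > 0" and "\<forall>x\<in>{0..1}. b x > \<beta>" and "\<forall>x\<in>{0..1}. c x \<ge> 0"
    and "Q \<in> \<rat>" and "0 < Q" and "Q < 1" and "a > 0" and "Cstar > 0"
    and "continuous_on {0..1} u0"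
    and "\<forall>x\<in>{0<..<1}. (u0 has_real_derivative u01 x) (at x)
                     \<and> (u01 has_real_derivative u02 x) (at x)
                     \<and> - b x * u01 x + c x * u0 x = f x"
    and "u0 1 = 0"
  shows "\<exists>C>0. \<forall>(\<epsilon>::real) (N::nat) (J::nat) (u::real \<Rightarrow> real) u1 u2 (W::nat \<Rightarrow> real) \<eta>1 \<eta>2.
    (let lam = (if shishkin then real N else 1 / \<epsilon>);
         \<xi> = (a * \<epsilon> / \<beta>) * ln lam;
         x = mesh N J \<xi>;
         w = (\<lambda>t. u t - u0 t); w1 = (\<lambda>t. u1 t - u01 t); w2 = (\<lambda>t. u2 t - u02 t);
         \<kappa> = (if shishkin then 1 else 1 + \<bar>ln \<epsilon>\<bar> / real N)
     in (0 < \<epsilon> \<and> \<epsilon> < 1 \<and> 0 < N \<and> real J = Q * real N \<and> \<xi> \<le> Q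
         \<and> continuous_on {0..1} u
         \<and> (\<forall>t\<in>{0<..<1}. (u has_real_derivative u1 t) (at t)
                     \<and> (u1 has_real_derivative u2 t) (at t)
                     \<and> - \<epsilon> * u2 t - b t * u1 t + c t * u t = f t)
         \<and> u 0 = 0 \<and> u 1 = 0
         \<and> W 0 = - u0 0 \<and> W N = 0
         \<and> (\<forall>i. 1 \<le> i \<and> i \<le> N - 1 \<longrightarrow> LN \<epsilon> b c x W i = \<epsilon> * u02 (x i))
         \<and> \<eta>1 \<ge> 0 \<and> \<eta>2 \<ge> 0
         \<and> (\<forall>i. 1 \<le> i \<and> i \<le> J - 1 \<longrightarrow>
               \<bar>trunc \<epsilon> b x w w1 w2 i\<bar> \<le> Cstar * \<eta>1 * (1 + exp (- \<beta> * x i / \<epsilon>) / \<epsilon>))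
         \<and> (\<forall>i. J \<le> i \<and> i \<le> N - 1 \<longrightarrow> \<bar>trunc \<epsilon> b x w w1 w2 i\<bar> \<le> Cstar * \<eta>2))
        \<longrightarrow> (\<forall>i\<le>N. \<bar>w (x i) - W i\<bar> \<le> C * max (\<kappa> * \<eta>1) \<eta>2))"
proof -
  have "0 < Cstar * (8 / \<beta>\<^sup>2 + 1 / \<beta>)" using assms(4,11) by (simp add: add_pos_pos)
  then show ?thesis
    unfolding Let_def
    by (intro exI[of _ "Cstar * (8 / \<beta>\<^sup>2 + 1 / \<beta>)"] conjI allI impI, assumption, elim conjE)
      (rule ASI_error_bound[OF assms(4-6,8-11,13,14) refl]; assumption)
qed

end
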